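(* Every LSGA net is distributed.
   Context: A Petri net $N=(S,T,F,M_0,\ell)$ has disjoint $S,T$, $F:(S\times T)\cup(T\times S)\to\mathbb N$, $M_0\in\mathbb N^S$, labelling $\ell$. ${}^\bullet x(y)=F(y,x)$, $x^\bullet(y)=F(x,y)$. For a finite nonempty multiset $G$ of transitions, $M[G\rangle M'$ iff ${}^\bullet G\le M$ and $M'=M-{}^\bullet G+G^\bullet$; $t\smile u$ iff $M[\{t\}+\{u\}\rangle$ for some reachable $M$. A net is distributed iff there is a function $D$ on $S\cup T$ with (1) $s\in{}^\bullet t\Rightarrow D(t)=D(s)$ and (2) $t\smile u\Rightarrow D(t)\ne D(u)$. A component with interface is $(N,I,O)$ with $I,O\subseteq S$, $I\cap O=\emptyset$ and $o^\bullet=\emptyset$ for $o\in O$; it is sequential iff there is $Q\subseteq S\setminus(I\cup O)$ with $|{}^\bullet t\restriction Q|=|t^\bullet\restriction Q|=1$ for all $t\in T$ and $|M_0\restriction Q|=1$. For components $((S_k,T_k,F_k,M_{0k},\ell_k),I_k,O_k)$, $k\in K$, with $(S_k\cup T_k)\cap(S_l\cup T_l)=(I_k\cup O_k)\cap(I_l\cup O_l)$ and $I_k\cap I_l=\emptyset$ for $k\ne l$, the asynchronous parallel composition is $((\bigcup S_k,\bigcup T_k,\bigcup F_k,\sum M_{0k},\bigcup\ell_k),\bigcup I_k,\bigcup O_k\setminus\bigcup I_k)$. $N$ is an LSGA net iff $(N,I,O)$ equals the asynchronous parallel composition of some family of sequential components, for some $I,O$. *)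

theory Defs
  imports Main "HOL-Library.Multiset"
begin

text \<open>Places and transitions live in a common node type 'x.
  Flow F x y is the arc weight from x to y; the initial marking and the labelling are
  total functions, meaningful only on S resp. T.\<close>

record ('x, 'l) pnet =
  places :: "'x set"
  trans  :: "'x set"
  flow   :: "'x \<Rightarrow> 'x \<Rightarrow> nat"
  init   :: "'x \<Rightarrow> nat"
  lab    :: "'x \<Rightarrow> 'l"

definition petri_net :: "('x, 'l) pnet \<Rightarrow> bool" where
  "petri_net N \<longleftrightarrow>
     places N \<inter> trans N = {} \<and>
     (\<forall>x y. flow N x y \<noteq> 0 \<longrightarrow>
        (x \<in> places N \<and> y \<in> trans N) \<or> (x \<in> trans N \<and> y \<in> places N)) \<and>
     (\<forall>s. init N s \<noteq> 0 \<longrightarrow> s \<in> places N)"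

definition preset_ms :: "('x, 'l) pnet \<Rightarrow> 'x multiset \<Rightarrow> 'x \<Rightarrow> nat" where
  "preset_ms N G = (\<lambda>s. \<Sum>\<^sub># (image_mset (\<lambda>t. flow N s t) G))"

definition postset_ms :: "('x, 'l) pnet \<Rightarrow> 'x multiset \<Rightarrow> 'x \<Rightarrow> nat" where
  "postset_ms N G = (\<lambda>s. \<Sum>\<^sub># (image_mset (\<lambda>t. flow N t s) G))"

definition fires :: "('x, 'l) pnet \<Rightarrow> ('x \<Rightarrow> nat) \<Rightarrow> 'x multiset \<Rightarrow> ('x \<Rightarrow> nat) \<Rightarrow> bool" where
  "fires N M G M' \<longleftrightarrow>
     G \<noteq> {#} \<and> set_mset G \<subseteq> trans N \<and>
     (\<forall>s. preset_ms N G s \<le> M s) \<and>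
     M' = (\<lambda>s. M s - preset_ms N G s + postset_ms N G s)"

inductive reachable :: "('x, 'l) pnet \<Rightarrow> ('x \<Rightarrow> nat) \<Rightarrow> bool" for N where
  init_reach: "reachable N (init N)"
| step_reach: "reachable N M \<Longrightarrow> fires N M G M' \<Longrightarrow> reachable N M'"

definition concurrent :: "('x, 'l) pnet \<Rightarrow> 'x \<Rightarrow> 'x \<Rightarrow> bool" where
  "concurrent N t u \<longleftrightarrow> (\<exists>M M'. reachable N M \<and> fires N M ({#t#} + {#u#}) M')"

text \<open>The distribution function is taken with values in the node type
  itself; this is no loss of generality (any distribution can be recoded injectively into
  S \<union> T by choosing a representative node of each location).\<close>

definition distributed :: "('x, 'l) pnet \<Rightarrow> bool" where
  "distributed N \<longleftrightarrow>
     (\<exists>D :: 'x \<Rightarrow> 'x.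
        (\<forall>t \<in> trans N. \<forall>s \<in> places N. flow N s t \<noteq> 0 \<longrightarrow> D t = D s) \<and>
        (\<forall>t \<in> trans N. \<forall>u \<in> trans N. concurrent N t u \<longrightarrow> D t \<noteq> D u))"

definition restr_size_one :: "'x set \<Rightarrow> ('x \<Rightarrow> nat) \<Rightarrow> bool" where
  "restr_size_one Q f \<longleftrightarrow>
     finite {s \<in> Q. f s \<noteq> 0} \<and> (\<Sum>s \<in> {s \<in> Q. f s \<noteq> 0}. f s) = 1"

definition component :: "('x, 'l) pnet \<Rightarrow> 'x set \<Rightarrow> 'x set \<Rightarrow> bool" where
  "component N Inp Out \<longleftrightarrow>
     petri_net N \<and> Inp \<subseteq> places N \<and> Out \<subseteq> places N \<and> Inp \<inter> Out = {} \<and>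
     (\<forall>p \<in> Out. \<forall>x. flow N p x = 0)"

definition sequential_component :: "('x, 'l) pnet \<Rightarrow> 'x set \<Rightarrow> 'x set \<Rightarrow> bool" where
  "sequential_component N Inp Out \<longleftrightarrow>
     component N Inp Out \<and>
     (\<exists>Q. Q \<subseteq> places N - (Inp \<union> Out) \<and>
        (\<forall>t \<in> trans N. restr_size_one Q (\<lambda>s. flow N s t) \<and> restr_size_one Q (\<lambda>s. flow N t s)) \<and>
        restr_size_one Q (init N))"

definition fam_sum :: "'k set \<Rightarrow> ('k \<Rightarrow> nat) \<Rightarrow> nat" where
  "fam_sum K f = (\<Sum>k \<in> {k \<in> K. f k \<noteq> 0}. f k)"

definition async_composition ::
  "'k set \<Rightarrow> ('k \<Rightarrow> ('x, 'l) pnet) \<Rightarrow> ('k \<Rightarrow> 'x set) \<Rightarrow> ('k \<Rightarrow> 'x set)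
   \<Rightarrow> ('x, 'l) pnet \<Rightarrow> 'x set \<Rightarrow> 'x set \<Rightarrow> bool" where
  "async_composition K C Ik Ok N Inp Out \<longleftrightarrow>
     (\<forall>k \<in> K. \<forall>l \<in> K. k \<noteq> l \<longrightarrow>
        (places (C k) \<union> trans (C k)) \<inter> (places (C l) \<union> trans (C l))
          = (Ik k \<union> Ok k) \<inter> (Ik l \<union> Ok l) \<and>
        Ik k \<inter> Ik l = {}) \<and>
     (\<forall>s. finite {k \<in> K. init (C k) s \<noteq> 0}) \<and>
     places N = (\<Union>k \<in> K. places (C k)) \<and>
     trans N = (\<Union>k \<in> K. trans (C k)) \<and>
     (\<forall>x y. flow N x y = fam_sum K (\<lambda>k. flow (C k) x y)) \<and>
     (\<forall>s. init N s = fam_sum K (\<lambda>k. init (C k) s)) \<and>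
     (\<forall>k \<in> K. \<forall>t \<in> trans (C k). lab N t = lab (C k) t) \<and>
     Inp = (\<Union>k \<in> K. Ik k) \<and>
     Out = (\<Union>k \<in> K. Ok k) - (\<Union>k \<in> K. Ik k)"

definition LSGA :: "'k itself \<Rightarrow> ('x, 'l) pnet \<Rightarrow> bool" where
  "LSGA _ N \<longleftrightarrow>
     (\<exists>Inp Out (K :: 'k set) C Ik Ok.
        (\<forall>k \<in> K. sequential_component (C k) (Ik k) (Ok k)) \<and>
        async_composition K C Ik Ok N Inp Out)"

end

theory Submission
  imports Defs
begin

text \<open>Each sequential component has a set of control places carrying exactly one token, and every
  one of its transitions moves that token from one control place to another. Control places are
  private to their component, so in the composed net the one-token invariant survives for every
  component separately; hence two transitions of one component never fire concurrently. Locating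
  every transition and non-output place at (a control place of) its component is therefore a
  distribution: a transition only consumes from non-output places of its own component, and
  transitions of different components get different locations.\<close>

definition indicator_on :: "'x set \<Rightarrow> ('x \<Rightarrow> nat) \<Rightarrow> 'x \<Rightarrow> bool" where
  "indicator_on Q f s \<longleftrightarrow> s \<in> Q \<and> f s = 1 \<and> (\<forall>s'\<in>Q. s' \<noteq> s \<longrightarrow> f s' = 0)"

lemma restr_size_one_iff_indicator_on:
  "restr_size_one Q f \<longleftrightarrow> (\<exists>s. indicator_on Q f s)"
proof
  let ?A = "{s \<in> Q. f s \<noteq> 0}"
  assume "restr_size_one Q f"
  then have fin: "finite ?A" and sum_one: "(\<Sum>s\<in>?A. f s) = 1"
    unfolding restr_size_one_def by auto
  obtain s where s: "s \<in> ?A"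
    using sum_one by (metis empty_iff equals0I sum.empty zero_neq_one)
  have split: "(\<Sum>x\<in>?A. f x) = f s + (\<Sum>x\<in>?A - {s}. f x)"
    using fin s by (simp add: sum.remove)
  then have fs: "f s = 1"
    using s sum_one by simp
  have "f s' = 0" if "s' \<in> Q" "s' \<noteq> s" for s'
  proof (rule ccontr)
    assume "f s' \<noteq> 0"
    then have "f s' \<le> (\<Sum>x\<in>?A - {s}. f x)"
      using fin that by (intro member_le_sum) auto
    then show False
      using split sum_one fs \<open>f s' \<noteq> 0\<close> by simp
  qed
  then show "\<exists>s. indicator_on Q f s"
    using s fs unfolding indicator_on_def by blast
next
  assume "\<exists>s. indicator_on Q f s"
  then obtain s where s: "indicator_on Q f s" ..
  then have "{s \<in> Q. f s \<noteq> 0} = {s}"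
    unfolding indicator_on_def by auto
  then show "restr_size_one Q f"
    using s unfolding restr_size_one_def indicator_on_def by simp
qed

lemma restr_size_one_cong:
  "(\<And>s. s \<in> Q \<Longrightarrow> f s = g s) \<Longrightarrow> restr_size_one Q f = restr_size_one Q g"
  unfolding restr_size_one_iff_indicator_on indicator_on_def by auto

lemma indicator_on_unique:
  "indicator_on Q f s \<Longrightarrow> s' \<in> Q \<Longrightarrow> f s' \<noteq> 0 \<Longrightarrow> s' = s"
  unfolding indicator_on_def by auto

lemma fam_sum_eq_single:
  assumes "k \<in> K" "\<And>l. l \<in> K \<Longrightarrow> l \<noteq> k \<Longrightarrow> f l = 0"
  shows "fam_sum K f = f k"
proof -
  have "{l \<in> K. f l \<noteq> 0} \<subseteq> {k}"
    using assms(2) by (auto intro: ccontr)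
  then have "{l \<in> K. f l \<noteq> 0} = {} \<or> {l \<in> K. f l \<noteq> 0} = {k}"
    by blast
  then show ?thesis
    unfolding fam_sum_def using assms by auto
qed

lemma fam_sum_neq_zeroE:
  assumes "fam_sum K f \<noteq> 0"
  obtains k where "k \<in> K" "f k \<noteq> 0"
  using assms unfolding fam_sum_def by (metis (mono_tags, lifting) mem_Collect_eq sum.neutral)

lemma petri_net_outside_nodes:
  assumes "petri_net N" "x \<notin> places N \<union> trans N"
  shows "flow N x y = 0" "flow N y x = 0" "init N x = 0"
  using assms unfolding petri_net_def by auto

lemma sum_mset_image_filter_mset:
  assumes "\<And>x. \<not> P x \<Longrightarrow> f x = (0::nat)"
  shows "\<Sum>\<^sub># (image_mset f G) = \<Sum>\<^sub># (image_mset f (filter_mset P G))"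
  using assms by (induction G) auto

locale sequential_composition =
  fixes K :: "'k set" and C :: "'k \<Rightarrow> ('x, 'l) pnet" and Ik Ok :: "'k \<Rightarrow> 'x set"
    and N :: "('x, 'l) pnet" and Inp Out :: "'x set" and Q :: "'k \<Rightarrow> 'x set"
  assumes composition: "async_composition K C Ik Ok N Inp Out"
    and petri_net: "petri_net N"
    and component: "k \<in> K \<Longrightarrow> component (C k) (Ik k) (Ok k)"
    and control_places: "k \<in> K \<Longrightarrow> Q k \<subseteq> places (C k) - (Ik k \<union> Ok k)"
    and control_pre: "k \<in> K \<Longrightarrow> t \<in> trans (C k) \<Longrightarrow> restr_size_one (Q k) (\<lambda>s. flow (C k) s t)"
    and control_post: "k \<in> K \<Longrightarrow> t \<in> trans (C k) \<Longrightarrow> restr_size_one (Q k) (\<lambda>s. flow (C k) t s)"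
    and control_init: "k \<in> K \<Longrightarrow> restr_size_one (Q k) (init (C k))"
begin

lemma petri_net_component: "k \<in> K \<Longrightarrow> petri_net (C k)"
  using component unfolding component_def by auto

lemma shared_nodes_are_interface:
  assumes "k \<in> K" "l \<in> K" "k \<noteq> l" "x \<in> places (C k) \<union> trans (C k)" "x \<notin> Ik k \<union> Ok k"
  shows "x \<notin> places (C l) \<union> trans (C l)"
proof -
  have "(places (C k) \<union> trans (C k)) \<inter> (places (C l) \<union> trans (C l)) = (Ik k \<union> Ok k) \<inter> (Ik l \<union> Ok l)"
    using composition assms(1-3) unfolding async_composition_def by simp
  then show ?thesis
    using assms(4,5) by blast
qed

lemma control_place_private:
  assumes "k \<in> K" "l \<in> K" "k \<noteq> l" "s \<in> Q k"
  shows "s \<notin> places (C l) \<union> trans (C l)"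
  using shared_nodes_are_interface[OF assms(1-3)] control_places[OF assms(1)] assms(4) by blast

lemma control_place_local:
  assumes "k \<in> K" "s \<in> Q k"
  shows "flow N s t = flow (C k) s t" "flow N t s = flow (C k) t s" "init N s = init (C k) s"
proof -
  have zero: "flow (C l) s t = 0" "flow (C l) t s = 0" "init (C l) s = 0"
    if "l \<in> K" "l \<noteq> k" for l
    using petri_net_outside_nodes[OF petri_net_component[OF that(1)]]
      control_place_private[OF assms(1) that(1) that(2)[symmetric] assms(2)]
    by auto
  have "flow N s t = fam_sum K (\<lambda>k. flow (C k) s t)" "flow N t s = fam_sum K (\<lambda>k. flow (C k) t s)"
    "init N s = fam_sum K (\<lambda>k. init (C k) s)"
    using composition unfolding async_composition_def by auto
  then show "flow N s t = flow (C k) s t" "flow N t s = flow (C k) t s" "init N s = init (C k) s"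
    using fam_sum_eq_single[OF assms(1)] zero by auto
qed

abbreviation local_part :: "'k \<Rightarrow> 'x multiset \<Rightarrow> 'x multiset" where
  "local_part k G \<equiv> filter_mset (\<lambda>t. t \<in> trans (C k)) G"

lemma control_place_pre_post:
  assumes "k \<in> K" "s \<in> Q k"
  shows "preset_ms N G s = \<Sum>\<^sub># (image_mset (\<lambda>t. flow (C k) s t) (local_part k G))"
    "postset_ms N G s = \<Sum>\<^sub># (image_mset (\<lambda>t. flow (C k) t s) (local_part k G))"
proof -
  have "flow (C k) s t = 0" "flow (C k) t s = 0" if "t \<notin> trans (C k)" for t
    using petri_net_component[OF assms(1)] control_places[OF assms(1)] assms(2) that
    unfolding petri_net_def by auto
  then show "preset_ms N G s = \<Sum>\<^sub># (image_mset (\<lambda>t. flow (C k) s t) (local_part k G))"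
    "postset_ms N G s = \<Sum>\<^sub># (image_mset (\<lambda>t. flow (C k) t s) (local_part k G))"
    unfolding preset_ms_def postset_ms_def control_place_local[OF assms]
    by (auto intro: sum_mset_image_filter_mset)
qed

lemma fires_local_part_consumes_token:
  assumes k: "k \<in> K" and M: "indicator_on (Q k) M s0" and fires: "fires N M G M'"
    and t: "t \<in># local_part k G"
  shows "flow (C k) s0 t = 1"
proof -
  obtain p where p: "indicator_on (Q k) (\<lambda>s. flow (C k) s t) p"
    using control_pre[OF k] t unfolding restr_size_one_iff_indicator_on by auto
  then have "p \<in> Q k" "flow (C k) p t = 1"
    unfolding indicator_on_def by auto
  have "flow (C k) p t \<le> \<Sum>\<^sub># (image_mset (\<lambda>t. flow (C k) p t) (local_part k G))"
    using t by (metis image_mset_add_mset insert_DiffM le_add1 sum_mset.insert)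
  also have "\<dots> = preset_ms N G p"
    using control_place_pre_post[OF k \<open>p \<in> Q k\<close>] by simp
  also have "\<dots> \<le> M p"
    using fires unfolding fires_def by auto
  finally have "p = s0"
    using indicator_on_unique[OF M \<open>p \<in> Q k\<close>] \<open>flow (C k) p t = 1\<close> by simp
  then show ?thesis
    using \<open>flow (C k) p t = 1\<close> by simp
qed

lemma fires_local_part_size_le_1:
  assumes k: "k \<in> K" and M: "indicator_on (Q k) M s0" and fires: "fires N M G M'"
  shows "size (local_part k G) \<le> 1"
proof -
  have "image_mset (\<lambda>t. flow (C k) s0 t) (local_part k G) = image_mset (\<lambda>t. 1) (local_part k G)"
    using fires_local_part_consumes_token[OF assms] by (intro image_mset_cong)
  then have "size (local_part k G) = \<Sum>\<^sub># (image_mset (\<lambda>t. flow (C k) s0 t) (local_part k G))"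
    by (simp add: size_multiset_overloaded_eq)
  also have "\<dots> = preset_ms N G s0"
    using control_place_pre_post(1)[OF k] M unfolding indicator_on_def by auto
  also have "\<dots> \<le> M s0"
    using fires unfolding fires_def by auto
  finally show ?thesis
    using M unfolding indicator_on_def by simp
qed

lemma fires_preserves_control_token:
  assumes k: "k \<in> K" and M: "indicator_on (Q k) M s0" and fires: "fires N M G M'"
  shows "restr_size_one (Q k) M'"
proof -
  have M': "M' = (\<lambda>s. M s - preset_ms N G s + postset_ms N G s)"
    using fires unfolding fires_def by auto
  consider "local_part k G = {#}" | t where "local_part k G = {#t#}"
    using fires_local_part_size_le_1[OF assms]
    by (metis One_nat_def le_SucE le_zero_eq size_1_singleton_mset size_eq_0_iff_empty)
  then show ?thesis
  proof cases
    case 1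
    then have "M' s = M s" if "s \<in> Q k" for s
      unfolding M' control_place_pre_post[OF k that] 1 by simp
    then show ?thesis
      using restr_size_one_cong[of "Q k" M' M] M unfolding restr_size_one_iff_indicator_on by auto
  next
    case (2 t)
    then have t: "t \<in> trans (C k)" "t \<in># local_part k G"
      by (metis filter_mset_eq_conv multi_member_last)+
    have "flow (C k) s0 t = 1"
      by (rule fires_local_part_consumes_token[OF k M fires t(2)])
    then have "M' s = flow (C k) t s" if "s \<in> Q k" for s
      using control_place_pre_post[OF k that] M' 2 M that
      unfolding indicator_on_def by (cases "s = s0") auto
    then show ?thesis
      using restr_size_one_cong[of "Q k" M' "\<lambda>s. flow (C k) t s"] control_post[OF k t(1)] by auto
  qed
qed

lemma reachable_control_token:
  assumes "k \<in> K" "reachable N M"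
  shows "restr_size_one (Q k) M"
  using assms(2)
proof induction
  case init_reach
  show ?case
    using control_init[OF assms(1)] restr_size_one_cong[of "Q k" "init N" "init (C k)"]
      control_place_local(3)[OF assms(1)] by auto
next
  case (step_reach M G M')
  then show ?case
    using fires_preserves_control_token[OF assms(1)] unfolding restr_size_one_iff_indicator_on
    by blast
qed

lemma local_transitions_not_concurrent:
  assumes k: "k \<in> K" and "t \<in> trans (C k)" "u \<in> trans (C k)"
  shows "\<not> concurrent N t u"
proof
  assume "concurrent N t u"
  then obtain M M' where "reachable N M" and fires: "fires N M ({#t#} + {#u#}) M'"
    unfolding concurrent_def by blast
  then obtain s0 where "indicator_on (Q k) M s0"
    using reachable_control_token[OF k] unfolding restr_size_one_iff_indicator_on by blast
  from fires_local_part_size_le_1[OF k this fires] show False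
    using assms(2,3) by simp
qed

definition owned_by :: "'k \<Rightarrow> 'x \<Rightarrow> bool" where
  "owned_by k x \<longleftrightarrow> x \<in> trans (C k) \<or> x \<in> places (C k) - Ok k"

lemma owned_by_not_output:
  assumes "k \<in> K" "owned_by k x"
  shows "x \<notin> Ok k"
  using component[OF assms(1)] assms(2) unfolding owned_by_def component_def petri_net_def by blast

lemma owned_by_unique:
  assumes "k \<in> K" "l \<in> K" "owned_by k x" "owned_by l x"
  shows "k = l"
proof (rule ccontr)
  assume "k \<noteq> l"
  then have shared: "(places (C k) \<union> trans (C k)) \<inter> (places (C l) \<union> trans (C l))
      = (Ik k \<union> Ok k) \<inter> (Ik l \<union> Ok l)" and "Ik k \<inter> Ik l = {}"
    using composition assms unfolding async_composition_def by auto
  have "x \<in> (places (C k) \<union> trans (C k)) \<inter> (places (C l) \<union> trans (C l))"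
    using assms(3,4) unfolding owned_by_def by blast
  then have "x \<in> (Ik k \<union> Ok k) \<inter> (Ik l \<union> Ok l)"
    unfolding shared .
  then have "x \<in> Ik k \<inter> Ik l"
    using owned_by_not_output assms by blast
  then show False
    using \<open>Ik k \<inter> Ik l = {}\<close> by blast
qed

definition owner :: "'x \<Rightarrow> 'k" where
  "owner x = (SOME k. k \<in> K \<and> owned_by k x)"

lemma owner_eq: "k \<in> K \<Longrightarrow> owned_by k x \<Longrightarrow> owner x = k"
  unfolding owner_def by (rule some_equality) (auto intro: owned_by_unique)

definition control_place :: "'k \<Rightarrow> 'x" where
  "control_place k = (SOME s. s \<in> Q k)"

lemma control_place_in: "k \<in> K \<Longrightarrow> control_place k \<in> Q k"
  using control_init unfolding restr_size_one_iff_indicator_on indicator_on_def control_place_def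
  by (meson someI)

lemma input_place_owned_by:
  assumes "s \<in> places N" "flow N s t \<noteq> 0"
  obtains k where "k \<in> K" "owned_by k t" "owned_by k s"
proof -
  have "fam_sum K (\<lambda>k. flow (C k) s t) \<noteq> 0"
    using assms(2) composition unfolding async_composition_def by simp
  then obtain k where k: "k \<in> K" "flow (C k) s t \<noteq> 0"
    by (rule fam_sum_neq_zeroE)
  have "s \<notin> trans N"
    using assms(1) petri_net unfolding petri_net_def by blast
  then have "s \<notin> trans (C k)"
    using composition k(1) unfolding async_composition_def by blast
  then have "s \<in> places (C k)" "t \<in> trans (C k)"
    using petri_net_component[OF k(1)] k(2) unfolding petri_net_def by blast+
  moreover have "s \<notin> Ok k"
    using component[OF k(1)] k(2) unfolding component_def by auto
  ultimately show ?thesis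
    using that k(1) unfolding owned_by_def by blast
qed

lemma distributed: "distributed N"
  unfolding distributed_def
proof (intro exI[of _ "\<lambda>x. control_place (owner x)"] conjI ballI impI)
  fix t s assume "s \<in> places N" "flow N s t \<noteq> 0"
  then show "control_place (owner t) = control_place (owner s)"
    by (metis input_place_owned_by owner_eq)
next
  fix t u assume "t \<in> trans N" "u \<in> trans N" and concurrent: "concurrent N t u"
  then obtain k l where k: "k \<in> K" "t \<in> trans (C k)" and l: "l \<in> K" "u \<in> trans (C l)"
    using composition unfolding async_composition_def by auto
  then have owners: "owner t = k" "owner u = l"
    by (auto intro!: owner_eq simp: owned_by_def)
  show "control_place (owner t) \<noteq> control_place (owner u)"
  proof (cases "k = l")
    case True
    then show ?thesis
      using local_transitions_not_concurrent[OF k] l(2) concurrent by simp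
  next
    case False
    have "control_place l \<in> places (C l)"
      using control_place_in[OF l(1)] control_places[OF l(1)] by auto
    then show ?thesis
      using control_place_private[OF k(1) l(1) False control_place_in[OF k(1)]] owners by auto
  qed
qed

end

theorem corollary4p13:
  fixes N :: "('x, 'l) pnet"
  assumes "petri_net N"
    and "LSGA TYPE('k) N"
  shows "distributed N"
proof -
  obtain Inp Out and K :: "'k set" and C Ik Ok where
    seq: "\<forall>k \<in> K. sequential_component (C k) (Ik k) (Ok k)" and
    comp: "async_composition K C Ik Ok N Inp Out"
    using assms(2) unfolding LSGA_def by blast
  have "\<forall>k \<in> K. \<exists>Q. Q \<subseteq> places (C k) - (Ik k \<union> Ok k) \<and>
      (\<forall>t \<in> trans (C k). restr_size_one Q (\<lambda>s. flow (C k) s t)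
         \<and> restr_size_one Q (\<lambda>s. flow (C k) t s)) \<and>
      restr_size_one Q (init (C k))"
    using seq unfolding sequential_component_def by blast
  then obtain Q where "\<forall>k \<in> K. Q k \<subseteq> places (C k) - (Ik k \<union> Ok k) \<and>
      (\<forall>t \<in> trans (C k). restr_size_one (Q k) (\<lambda>s. flow (C k) s t)
         \<and> restr_size_one (Q k) (\<lambda>s. flow (C k) t s)) \<and>
      restr_size_one (Q k) (init (C k))"
    by (rule bchoice[elim_format]) blast
  then interpret sequential_composition K C Ik Ok N Inp Out Q
    using comp assms(1) seq unfolding sequential_component_def by unfold_locales auto
  show ?thesis by (rule distributed)
qed

end
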